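(* For all integers $s,t \ge 2$, the set $\Omega_{s,t}\subseteq[0,1]^2$ is compact and defines a simply connected region.
   Context: For a graph $G$, $k_t(G)$ is the number of cliques on $t$ vertices and $\overline{G}$ the complement. A pair $(x,y)\in[0,1]^2$ is realised by a sequence of graphs $(G_n)_{n\in\mathbb{N}}$ with $G_n$ of order $n$ if $\lim_{n\to\infty} k_s(\overline{G_n})/\binom{n}{s} = x$ and $\lim_{n\to\infty} k_t(G_n)/\binom{n}{t} = y$. $\Omega_{s,t}$ is the set of all pairs $(x,y)\in[0,1]^2$ realised by some sequence of graphs. *)

theory Defs
  imports "HOL-Analysis.Analysis"
begin

definition simple_graph :: "nat \<Rightarrow> (nat \<Rightarrow> nat \<Rightarrow> bool) \<Rightarrow> bool" where
  "simple_graph n E \<longleftrightarrow> (\<forall>x<n. \<forall>y<n. E x y \<longleftrightarrow> E y x) \<and> (\<forall>x<n. \<not> E x x)"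

definition graph_compl :: "(nat \<Rightarrow> nat \<Rightarrow> bool) \<Rightarrow> (nat \<Rightarrow> nat \<Rightarrow> bool)" where
  "graph_compl E = (\<lambda>x y. x \<noteq> y \<and> \<not> E x y)"

definition k_cliques :: "nat \<Rightarrow> nat \<Rightarrow> (nat \<Rightarrow> nat \<Rightarrow> bool) \<Rightarrow> nat" where
  "k_cliques t n E = card {S. S \<subseteq> {..<n} \<and> card S = t \<and> (\<forall>x\<in>S. \<forall>y\<in>S. x \<noteq> y \<longrightarrow> E x y)}"

definition Omega :: "nat \<Rightarrow> nat \<Rightarrow> (real \<times> real) set" where
  "Omega s t = {(x, y). \<exists>G :: nat \<Rightarrow> nat \<Rightarrow> nat \<Rightarrow> bool.
      (\<forall>n. simple_graph n (G n)) \<and>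
      (\<lambda>n. real (k_cliques s n (graph_compl (G n))) / real (n choose s)) \<longlonglongrightarrow> x \<and>
      (\<lambda>n. real (k_cliques t n (G n)) / real (n choose t)) \<longlonglongrightarrow> y}"

end

theory Submission
  imports Defs
begin

(* Omega is the set of limits of sequences whose n-th term is the density point of a graph of
   order n.  Such limit sets are closed, and all density points lie in the unit square, so Omega
   is compact.

   Write u = x + y and v = x - y.  Changing the edges at one vertex of a graph of order n moves
   both densities by O(1/n), while adding edges lowers v and moves u by at most the decrease of v.
   Sweeping a graph from the complete to the edgeless graph one vertex at a time and stopping
   where v first reaches c, and replacing one graph by another vertex by vertex, shows: if p and
   q lie in Omega, then so does every point with coordinates (u, v) = (w, c) such that
   u_p + |c - v_p| < w < u_q - |c - v_q|.  Hence each fibre v = c of Omega is a segment, and its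
   lower end point L c is 1-Lipschitz in c.  The fibres are nonempty for all c in [-1, 1] because
   of the graphs formed by a clique on a fraction alpha of the vertices.  Sliding every point of
   Omega along its fibre down to (L c, c) deforms Omega into a curve over [-1, 1], so Omega is
   contractible. *)

section \<open>Contractibility and limit sets\<close>

lemma contractible_if_segments_to_section:
  fixes S :: "'a::real_normed_vector set"
  assumes f: "continuous_on S f" "f \<in> S \<rightarrow> T"
    and g: "continuous_on T g" "g \<in> T \<rightarrow> S"
    and "contractible T"
    and segments: "\<And>x. x \<in> S \<Longrightarrow> closed_segment x (g (f x)) \<subseteq> S"
  shows "contractible S"
proof -
  have "homotopic_with_canon (\<lambda>h. True) S S id (g \<circ> f)"
    using f g segments
    by (intro homotopic_with_linear continuous_on_id continuous_on_compose) (auto intro: continuous_on_subset)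
  moreover obtain c where "homotopic_with_canon (\<lambda>h. True) S S (g \<circ> f) (\<lambda>x. c)"
    using nullhomotopic_through_contractible[OF f g \<open>contractible T\<close>] .
  ultimately show ?thesis
    unfolding contractible_def by (metis homotopic_with_trans)
qed

definition limit_set :: "(nat \<Rightarrow> 'a::metric_space set) \<Rightarrow> 'a set" where
  "limit_set P = {p. \<exists>x. (\<forall>n. x n \<in> P n) \<and> x \<longlonglongrightarrow> p}"

lemma infdist_less_imp_near:
  assumes "A \<noteq> {}" "infdist x A < e"
  shows "\<exists>a\<in>A. dist x a < e"
  using assms by (auto simp: infdist_notempty cINF_less_iff)

lemma mem_limit_set_if_infdist_tendsto_0:
  assumes "\<And>n. P n \<noteq> {}" "(\<lambda>n. infdist p (P n)) \<longlonglongrightarrow> 0"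
  shows "p \<in> limit_set P"
proof -
  have "\<forall>n. \<exists>x\<in>P n. dist p x < infdist p (P n) + 1 / real (Suc n)"
    using assms(1) by (intro allI infdist_less_imp_near) simp_all
  then obtain x where x: "\<And>n. x n \<in> P n" "\<And>n. dist p (x n) < infdist p (P n) + 1 / real (Suc n)"
    unfolding Bex_def choice_iff by blast
  from tendsto_add[OF assms(2) LIMSEQ_Suc[OF lim_const_over_n]]
  have bound: "(\<lambda>n. infdist p (P n) + 1 / real (Suc n)) \<longlonglongrightarrow> 0" by simp
  have "(\<lambda>n. dist (x n) p) \<longlonglongrightarrow> 0"
  proof (rule tendsto_sandwich[OF _ _ tendsto_const bound])
    show "\<forall>\<^sub>F n in sequentially. 0 \<le> dist (x n) p" by simp
    show "\<forall>\<^sub>F n in sequentially. dist (x n) p \<le> infdist p (P n) + 1 / real (Suc n)"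
      using less_imp_le[OF x(2)] by (simp add: dist_commute)
  qed
  then have "x \<longlonglongrightarrow> p" by (rule tendsto_dist_iff[THEN iffD2])
  then show "p \<in> limit_set P"
    using x(1) by (auto simp: limit_set_def)
qed

lemma mem_limit_set_iff:
  assumes "\<And>n. P n \<noteq> {}"
  shows "p \<in> limit_set P \<longleftrightarrow> (\<forall>e>0. \<forall>\<^sub>F n in sequentially. \<exists>x\<in>P n. dist x p < e)"
proof
  assume "p \<in> limit_set P"
  then obtain x where "\<forall>n. x n \<in> P n" "x \<longlonglongrightarrow> p" by (auto simp: limit_set_def)
  show "\<forall>e>0. \<forall>\<^sub>F n in sequentially. \<exists>x\<in>P n. dist x p < e"
  proof (intro allI impI)
    fix e :: real assume "e > 0"
    with \<open>x \<longlonglongrightarrow> p\<close> have "\<forall>\<^sub>F n in sequentially. dist (x n) p < e" by (rule tendstoD)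
    then show "\<forall>\<^sub>F n in sequentially. \<exists>x\<in>P n. dist x p < e"
      by (rule eventually_mono) (use \<open>\<forall>n. x n \<in> P n\<close> in blast)
  qed
next
  assume near: "\<forall>e>0. \<forall>\<^sub>F n in sequentially. \<exists>x\<in>P n. dist x p < e"
  have "(\<lambda>n. infdist p (P n)) \<longlonglongrightarrow> 0"
  proof (rule tendstoI)
    fix e :: real assume "e > 0"
    with near have "\<forall>\<^sub>F n in sequentially. \<exists>x\<in>P n. dist x p < e" by blast
    then show "\<forall>\<^sub>F n in sequentially. dist (infdist p (P n)) 0 < e"
    proof (rule eventually_mono)
      fix n assume "\<exists>x\<in>P n. dist x p < e"
      then obtain x where "x \<in> P n" "dist x p < e" by blast
      then have "infdist p (P n) < e"
        using infdist_le[of x "P n" p] by (simp add: dist_commute)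
      then show "dist (infdist p (P n)) 0 < e" by (simp add: infdist_nonneg)
    qed
  qed
  then show "p \<in> limit_set P" by (rule mem_limit_set_if_infdist_tendsto_0[OF assms])
qed

lemma closed_limit_set:
  assumes "\<And>n. P n \<noteq> {}"
  shows "closed (limit_set P)"
  unfolding closure_subset_eq[symmetric]
proof
  fix p assume "p \<in> closure (limit_set P)"
  then have approx: "\<forall>e>0. \<exists>q\<in>limit_set P. dist q p < e"
    by (simp add: closure_approachable)
  show "p \<in> limit_set P"
    unfolding mem_limit_set_iff[OF assms]
  proof (intro allI impI)
    fix e :: real assume "e > 0"
    then obtain q where q: "q \<in> limit_set P" "dist q p < e / 2"
      using approx half_gt_zero by blast
    from q(1) have "\<forall>e>0. \<forall>\<^sub>F n in sequentially. \<exists>x\<in>P n. dist x q < e"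
      by (simp add: mem_limit_set_iff[OF assms])
    then have "\<forall>\<^sub>F n in sequentially. \<exists>x\<in>P n. dist x q < e / 2"
      using \<open>e > 0\<close> half_gt_zero by blast
    then show "\<forall>\<^sub>F n in sequentially. \<exists>x\<in>P n. dist x p < e"
    proof (rule eventually_mono)
      fix n assume "\<exists>x\<in>P n. dist x q < e / 2"
      then obtain x where "x \<in> P n" "dist x q < e / 2" by blast
      moreover have "dist x p < e"
        using dist_triangle[of x p q] \<open>dist x q < e / 2\<close> q(2) by linarith
      ultimately show "\<exists>x\<in>P n. dist x p < e" by blast
    qed
  qed
qed

lemma limit_set_subset:
  assumes "\<And>n. P n \<subseteq> K" "closed K"
  shows "limit_set P \<subseteq> K"
proof
  fix p assume "p \<in> limit_set P"
  then obtain x where "\<forall>n. x n \<in> K" "x \<longlonglongrightarrow> p"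
    using assms(1) by (auto simp: limit_set_def)
  then show "p \<in> K" using assms(2) closed_sequentially by blast
qed

lemma compact_limit_set:
  assumes "\<And>n. P n \<noteq> {}" "\<And>n. P n \<subseteq> K" "compact K"
  shows "compact (limit_set P)"
proof -
  have "compact (K \<inter> limit_set P)"
    using assms(3) closed_limit_set[OF assms(1)] by (rule compact_Int_closed)
  moreover have "limit_set P \<subseteq> K"
    using assms(2,3) by (intro limit_set_subset compact_imp_closed)
  ultimately show ?thesis by (simp add: Int_absorb1)
qed

section \<open>The cone property in diagonal coordinates\<close>

definition diag_sum :: "real \<times> real \<Rightarrow> real" where
  "diag_sum p = fst p + snd p"

definition diag_diff :: "real \<times> real \<Rightarrow> real" where
  "diag_diff p = fst p - snd p"

definition of_diag :: "real \<Rightarrow> real \<Rightarrow> real \<times> real" where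
  "of_diag w c = ((w + c) / 2, (w - c) / 2)"

lemma diag_sum_of_diag [simp]: "diag_sum (of_diag w c) = w"
  by (simp add: diag_sum_def of_diag_def field_simps)

lemma diag_diff_of_diag [simp]: "diag_diff (of_diag w c) = c"
  by (simp add: diag_diff_def of_diag_def field_simps)

lemma of_diag_diag [simp]: "of_diag (diag_sum p) (diag_diff p) = p"
  by (cases p) (simp add: diag_sum_def diag_diff_def of_diag_def field_simps)

lemma linear_diag_sum: "linear diag_sum"
  by (rule linearI) (auto simp: diag_sum_def algebra_simps)

lemma linear_diag_diff: "linear diag_diff"
  by (rule linearI) (auto simp: diag_diff_def algebra_simps)

lemma continuous_on_of_diag [continuous_intros]:
  "continuous_on S w \<Longrightarrow> continuous_on S c \<Longrightarrow> continuous_on S (\<lambda>x. of_diag (w x) (c x))"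
  unfolding of_diag_def by (intro continuous_intros) auto

lemma dist_of_diag_le: "dist p (of_diag w c) \<le> \<bar>diag_sum p - w\<bar> + \<bar>diag_diff p - c\<bar>"
proof -
  have "dist p (of_diag w c) \<le> \<bar>fst p - (w + c) / 2\<bar> + \<bar>snd p - (w - c) / 2\<bar>"
    using sqrt_sum_squares_le_sum_abs[of "fst p - (w + c) / 2" "snd p - (w - c) / 2"]
    by (cases p) (simp add: of_diag_def dist_Pair_Pair dist_real_def)
  also have "\<dots> \<le> \<bar>diag_sum p - w\<bar> + \<bar>diag_diff p - c\<bar>"
    by (simp add: diag_sum_def diag_diff_def abs_if field_simps)
  finally show ?thesis .
qed

lemma diag_sum_dist_le: "\<bar>diag_sum p - diag_sum q\<bar> \<le> 2 * dist p q"
  and diag_diff_dist_le: "\<bar>diag_diff p - diag_diff q\<bar> \<le> 2 * dist p q"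
  using dist_fst_le[of p q] dist_snd_le[of p q]
  by (simp_all add: diag_sum_def diag_diff_def dist_real_def)

lemma cone_gap_imp_level_bounds:
  assumes "p \<in> cbox (0, 0) (1, 1)" "q \<in> cbox (0, 0) (1, 1)"
    and "diag_sum p + \<bar>c - diag_diff p\<bar> < diag_sum q - \<bar>c - diag_diff q\<bar>"
  shows "-1 \<le> c" "c \<le> 1"
proof -
  have "0 \<le> fst p" "0 \<le> snd p" "fst q \<le> 1" "snd q \<le> 1"
    using assms(1,2) by (auto simp: cbox_Pair_eq mem_Times_iff)
  moreover have "\<bar>c - diag_diff p\<bar> \<ge> c - diag_diff p" "\<bar>c - diag_diff p\<bar> \<ge> diag_diff p - c"
    "\<bar>c - diag_diff q\<bar> \<ge> c - diag_diff q" "\<bar>c - diag_diff q\<bar> \<ge> diag_diff q - c"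
    by linarith+
  ultimately show "-1 \<le> c" "c \<le> 1"
    using assms(3) unfolding diag_sum_def diag_diff_def by linarith+
qed

definition cone_interpolating :: "(real \<times> real) set \<Rightarrow> bool" where
  "cone_interpolating S \<longleftrightarrow> (\<forall>p\<in>S. \<forall>q\<in>S. \<forall>w c.
     diag_sum p + \<bar>c - diag_diff p\<bar> < w \<and> w < diag_sum q - \<bar>c - diag_diff q\<bar> \<longrightarrow> of_diag w c \<in> S)"

lemma cone_interpolating_fibre_segment:
  assumes S: "cone_interpolating S" and p: "p \<in> S" and q: "q \<in> S"
    and "diag_diff p = c" "diag_diff q = c" "diag_sum p \<le> w" "w \<le> diag_sum q"
  shows "of_diag w c \<in> S"
proof -
  consider "w = diag_sum p" | "w = diag_sum q" | "diag_sum p < w" "w < diag_sum q"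
    using assms(6,7) by linarith
  then show ?thesis
  proof cases
    case 1
    then show ?thesis using p assms(4) by (metis of_diag_diag)
  next
    case 2
    then show ?thesis using q assms(5) by (metis of_diag_diag)
  next
    case 3
    then show ?thesis using S p q assms(4,5) unfolding cone_interpolating_def by auto
  qed
qed

definition lower_edge :: "(real \<times> real) set \<Rightarrow> real \<Rightarrow> real" where
  "lower_edge S c = Inf (diag_sum ` {p \<in> S. diag_diff p = c})"

lemma
  assumes "compact S" "c \<in> diag_diff ` S"
  shows of_diag_lower_edge_in: "of_diag (lower_edge S c) c \<in> S"
    and lower_edge_le: "\<And>p. p \<in> S \<Longrightarrow> diag_diff p = c \<Longrightarrow> lower_edge S c \<le> diag_sum p"
proof -
  let ?F = "{p \<in> S. diag_diff p = c}"
  have "compact ?F"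
    unfolding Collect_conj_eq Collect_mem_eq diag_diff_def
    using assms(1) by (intro compact_Int_closed closed_Collect_eq continuous_intros) auto
  then have "compact (diag_sum ` ?F)"
    unfolding diag_sum_def by (intro compact_continuous_image continuous_intros)
  then have closed: "closed (diag_sum ` ?F)" and bdd: "bdd_below (diag_sum ` ?F)"
    by (auto intro: compact_imp_closed bounded_imp_bdd_below compact_imp_bounded)
  moreover have "diag_sum ` ?F \<noteq> {}" using assms(2) by auto
  ultimately have "lower_edge S c \<in> diag_sum ` ?F"
    unfolding lower_edge_def by (intro closed_contains_Inf)
  then show "of_diag (lower_edge S c) c \<in> S" by auto
  show "lower_edge S c \<le> diag_sum p" if "p \<in> S" "diag_diff p = c" for p
    unfolding lower_edge_def using that bdd by (auto intro: cInf_lower)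
qed

lemma lower_edge_le_shift:
  assumes S: "compact S" "cone_interpolating S" and c: "c \<in> diag_diff ` S" "c' \<in> diag_diff ` S"
  shows "lower_edge S c' \<le> lower_edge S c + \<bar>c - c'\<bar>"
proof (rule ccontr)
  assume gap: "\<not> ?thesis"
  define w where "w = (lower_edge S c + \<bar>c - c'\<bar> + lower_edge S c') / 2"
  have "of_diag w c' \<in> S"
    using S(2) of_diag_lower_edge_in[OF S(1) c(1)] of_diag_lower_edge_in[OF S(1) c(2)] gap
    unfolding cone_interpolating_def by (fastforce simp: w_def abs_minus_commute)
  then have "lower_edge S c' \<le> w" using lower_edge_le[OF S(1) c(2)] by fastforce
  then show False using gap by (simp add: w_def)
qed

lemma continuous_on_lower_edge:
  assumes "compact S" "cone_interpolating S"
  shows "continuous_on (diag_diff ` S) (lower_edge S)"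
proof -
  have "dist (lower_edge S c') (lower_edge S c) \<le> dist c' c"
    if "c \<in> diag_diff ` S" "c' \<in> diag_diff ` S" for c c'
    using lower_edge_le_shift[OF assms that] lower_edge_le_shift[OF assms that(2,1)]
    by (simp add: dist_real_def abs_minus_commute abs_le_iff)
  then show ?thesis
    unfolding continuous_on_iff by (metis le_less_trans)
qed

theorem contractible_if_cone_interpolating:
  assumes "compact S" "cone_interpolating S" "convex (diag_diff ` S)"
  shows "contractible S"
proof (rule contractible_if_segments_to_section)
  let ?g = "\<lambda>c. of_diag (lower_edge S c) c"
  show "continuous_on S diag_diff"
    using linear_diag_diff by (intro linear_continuous_on linear_conv_bounded_linear[THEN iffD1])
  show "continuous_on (diag_diff ` S) ?g"
    by (intro continuous_intros continuous_on_lower_edge assms)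
  show "?g \<in> diag_diff ` S \<rightarrow> S"
    using of_diag_lower_edge_in[OF assms(1)] by blast
  show "contractible (diag_diff ` S)" using assms(3) by (rule convex_imp_contractible)
  show "closed_segment x (?g (diag_diff x)) \<subseteq> S" if x: "x \<in> S" for x
  proof
    fix z assume z: "z \<in> closed_segment x (?g (diag_diff x))"
    have "diag_sum z \<in> closed_segment (diag_sum x) (diag_sum (?g (diag_diff x)))"
      using z by (metis closed_segment_linear_image[OF linear_diag_sum] imageI)
    moreover have "diag_diff z \<in> closed_segment (diag_diff x) (diag_diff (?g (diag_diff x)))"
      using z by (metis closed_segment_linear_image[OF linear_diag_diff] imageI)
    moreover have "lower_edge S (diag_diff x) \<le> diag_sum x"
      using lower_edge_le[OF assms(1)] x by blast
    ultimately have "of_diag (diag_sum z) (diag_diff z) \<in> S"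
      using x by (intro cone_interpolating_fibre_segment[OF assms(2) of_diag_lower_edge_in[OF assms(1)]])
        (auto simp: closed_segment_eq_real_ivl split: if_splits)
    then show "z \<in> S" by simp
  qed
qed auto

section \<open>Clique densities\<close>

type_synonym graph = "nat \<Rightarrow> nat \<Rightarrow> bool"

definition cliques :: "nat \<Rightarrow> nat \<Rightarrow> graph \<Rightarrow> nat set set" where
  "cliques t n E = {S. S \<subseteq> {..<n} \<and> card S = t \<and> (\<forall>x\<in>S. \<forall>y\<in>S. x \<noteq> y \<longrightarrow> E x y)}"

lemma k_cliques_eq_card: "k_cliques t n E = card (cliques t n E)"
  by (simp add: k_cliques_def cliques_def)

lemma cliques_subset_subsets: "cliques t n E \<subseteq> {S. S \<subseteq> {..<n} \<and> card S = t}"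
  by (auto simp: cliques_def)

lemma finite_cliques: "finite (cliques t n E)"
  by (rule finite_subset[OF cliques_subset_subsets]) auto

lemma k_cliques_le_choose: "k_cliques t n E \<le> n choose t"
  unfolding k_cliques_eq_card
  using card_mono[OF _ cliques_subset_subsets] by (simp add: n_subsets)

lemma k_cliques_cong:
  assumes "\<And>a b. a < n \<Longrightarrow> b < n \<Longrightarrow> E a b = E' a b"
  shows "k_cliques t n E = k_cliques t n E'"
proof -
  have "cliques t n E = cliques t n E'"
    using assms by (auto simp: cliques_def subset_iff)
  then show ?thesis by (simp add: k_cliques_eq_card)
qed

definition subgraph :: "nat \<Rightarrow> graph \<Rightarrow> graph \<Rightarrow> bool" where
  "subgraph n E E' \<longleftrightarrow> (\<forall>a<n. \<forall>b<n. E a b \<longrightarrow> E' a b)"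

lemma subgraph_compl: "subgraph n E E' \<Longrightarrow> subgraph n (graph_compl E') (graph_compl E)"
  by (auto simp: subgraph_def graph_compl_def)

lemma k_cliques_mono: "subgraph n E E' \<Longrightarrow> k_cliques t n E \<le> k_cliques t n E'"
  unfolding k_cliques_eq_card
  by (intro card_mono finite_cliques) (auto simp: cliques_def subgraph_def subset_iff)

lemma k_cliques_complete:
  assumes "\<And>a b. a < n \<Longrightarrow> b < n \<Longrightarrow> a \<noteq> b \<Longrightarrow> E a b"
  shows "k_cliques t n E = n choose t"
proof -
  have "cliques t n E = {S. S \<subseteq> {..<n} \<and> card S = t}"
    using assms by (auto simp: cliques_def)
  then show ?thesis by (simp add: k_cliques_eq_card n_subsets)
qed

lemma two_le_card_imp_other:
  assumes "2 \<le> card S" "x \<in> S"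
  shows "\<exists>y\<in>S. y \<noteq> x"
proof (rule ccontr)
  assume "\<not> ?thesis"
  then have "S = {x}" using assms(2) by blast
  then show False using assms(1) by simp
qed

lemma k_cliques_edgeless:
  assumes "\<And>a b. a < n \<Longrightarrow> b < n \<Longrightarrow> \<not> E a b" "2 \<le> t"
  shows "k_cliques t n E = 0"
proof -
  have "cliques t n E = {}"
  proof (rule ccontr)
    assume "cliques t n E \<noteq> {}"
    then obtain S where S: "S \<subseteq> {..<n}" "card S = t" "\<forall>x\<in>S. \<forall>y\<in>S. x \<noteq> y \<longrightarrow> E x y"
      by (auto simp: cliques_def)
    have "2 \<le> card S" using S(2) assms(2) by simp
    then obtain x where x: "x \<in> S" by fastforce
    then obtain y where "y \<in> S" "y \<noteq> x"
      using two_le_card_imp_other[OF \<open>2 \<le> card S\<close>] by blast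
    then show False using x S assms(1) by blast
  qed
  then show ?thesis by (simp add: k_cliques_eq_card)
qed

definition agree_off :: "nat \<Rightarrow> graph \<Rightarrow> graph \<Rightarrow> bool" where
  "agree_off i E E' \<longleftrightarrow> (\<forall>a b. a \<noteq> i \<longrightarrow> b \<noteq> i \<longrightarrow> E a b = E' a b)"

lemma agree_off_sym: "agree_off i E E' \<Longrightarrow> agree_off i E' E"
  by (auto simp: agree_off_def)

lemma agree_off_compl: "agree_off i E E' \<Longrightarrow> agree_off i (graph_compl E) (graph_compl E')"
  by (auto simp: agree_off_def graph_compl_def)

lemma card_subsets_containing_le:
  "card {S. S \<subseteq> {..<n} \<and> card S = t \<and> i \<in> S} \<le> (n - 1) choose (t - 1)"
proof (cases "i < n \<and> 1 \<le> t")
  case False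
  have "{S. S \<subseteq> {..<n} \<and> card S = t \<and> i \<in> S} = {}"
  proof (rule equals0I)
    fix S assume S: "S \<in> {S. S \<subseteq> {..<n} \<and> card S = t \<and> i \<in> S}"
    then have "finite S" "i \<in> S" "i < n" using finite_subset[of S "{..<n}"] by auto
    then have "1 \<le> card S" by (simp add: Suc_le_eq card_gt_0_iff) blast
    then show False using S False \<open>i < n\<close> by simp
  qed
  then show ?thesis by (metis card.empty le0)
next
  case True
  let ?T = "{B. B \<subseteq> {..<n} - {i} \<and> card B = t - 1}"
  have fin: "finite ?T" by (rule finite_subset[of _ "Pow {..<n}"]) auto
  have "{S. S \<subseteq> {..<n} \<and> card S = t \<and> i \<in> S} \<subseteq> insert i ` ?T"
  proof
    fix S assume S: "S \<in> {S. S \<subseteq> {..<n} \<and> card S = t \<and> i \<in> S}"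
    then have "S - {i} \<in> ?T" using finite_subset[of S "{..<n}"] by auto
    moreover have "S = insert i (S - {i})" using S by auto
    ultimately show "S \<in> insert i ` ?T" by blast
  qed
  then have "card {S. S \<subseteq> {..<n} \<and> card S = t \<and> i \<in> S} \<le> card (insert i ` ?T)"
    by (intro card_mono finite_imageI fin)
  also have "\<dots> \<le> card ?T" by (rule card_image_le[OF fin])
  also have "card ?T = (n - 1) choose (t - 1)"
    using True by (subst n_subsets) auto
  finally show ?thesis .
qed

lemma k_cliques_agree_off_le:
  assumes "agree_off i E E'"
  shows "k_cliques t n E \<le> k_cliques t n E' + ((n - 1) choose (t - 1))"
proof -
  let ?C = "{S. S \<subseteq> {..<n} \<and> card S = t \<and> i \<in> S}"
  have "cliques t n E \<subseteq> cliques t n E' \<union> ?C"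
    using assms by (auto simp: cliques_def agree_off_def) metis
  then have "card (cliques t n E) \<le> card (cliques t n E' \<union> ?C)"
    by (intro card_mono finite_UnI finite_cliques) (auto intro: finite_subset[of _ "Pow {..<n}"])
  also have "\<dots> \<le> card (cliques t n E') + card ?C" by (rule card_Un_le)
  finally show ?thesis
    using card_subsets_containing_le[of n t i] by (simp add: k_cliques_eq_card)
qed

definition clique_density :: "nat \<Rightarrow> nat \<Rightarrow> graph \<Rightarrow> real" where
  "clique_density t n E = real (k_cliques t n E) / real (n choose t)"

lemma clique_density_nonneg: "0 \<le> clique_density t n E"
  by (simp add: clique_density_def)

lemma clique_density_le_1: "clique_density t n E \<le> 1"
  using k_cliques_le_choose[of t n E]
  by (cases "n choose t = 0") (auto simp: clique_density_def divide_le_eq_1)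

lemma choose_pred_over_choose:
  assumes "1 \<le> t" "t \<le> n"
  shows "real ((n - 1) choose (t - 1)) / real (n choose t) = real t / real n"
proof -
  obtain k where k: "t = Suc k" using assms by (cases t) auto
  have "real t * real (n choose t) = real n * real ((n - 1) choose (t - 1))"
    using binomial_absorption[of k n] unfolding k by (metis of_nat_mult diff_Suc_1)
  moreover have "real (n choose t) > 0" "real n > 0" using assms by auto
  ultimately show ?thesis by (simp add: field_simps)
qed

lemma clique_density_agree_off:
  assumes "agree_off i E E'" "1 \<le> t" "t \<le> n"
  shows "\<bar>clique_density t n E - clique_density t n E'\<bar> \<le> real t / real n"
proof -
  have "\<bar>real (k_cliques t n E) - real (k_cliques t n E')\<bar> \<le> real ((n - 1) choose (t - 1))"
    using k_cliques_agree_off_le[OF assms(1), of t n]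
      k_cliques_agree_off_le[OF agree_off_sym[OF assms(1)], of t n] by linarith
  then have "\<bar>real (k_cliques t n E) - real (k_cliques t n E')\<bar> / real (n choose t)
      \<le> real ((n - 1) choose (t - 1)) / real (n choose t)"
    by (rule divide_right_mono) simp
  then show ?thesis
    using choose_pred_over_choose[OF assms(2,3)]
    by (simp add: clique_density_def diff_divide_distrib[symmetric])
qed

lemma clique_density_mono: "subgraph n E E' \<Longrightarrow> clique_density t n E \<le> clique_density t n E'"
  unfolding clique_density_def by (intro divide_right_mono) (auto dest: k_cliques_mono)

lemma clique_density_complete:
  "(\<And>a b. a < n \<Longrightarrow> b < n \<Longrightarrow> a \<noteq> b \<Longrightarrow> E a b) \<Longrightarrow> t \<le> n \<Longrightarrow> clique_density t n E = 1"
  by (simp add: clique_density_def k_cliques_complete)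

lemma clique_density_edgeless:
  "(\<And>a b. a < n \<Longrightarrow> b < n \<Longrightarrow> \<not> E a b) \<Longrightarrow> 2 \<le> t \<Longrightarrow> clique_density t n E = 0"
  by (simp add: clique_density_def k_cliques_edgeless)

section \<open>Sweeping and splicing graphs\<close>

definition saturate_below :: "nat \<Rightarrow> graph \<Rightarrow> graph" where
  "saturate_below m F = (\<lambda>a b. F a b \<or> (a \<noteq> b \<and> (a < m \<or> b < m)))"

definition isolate_below :: "nat \<Rightarrow> graph \<Rightarrow> graph" where
  "isolate_below m F = (\<lambda>a b. F a b \<and> m \<le> a \<and> m \<le> b)"

definition sweep :: "nat \<Rightarrow> graph \<Rightarrow> nat \<Rightarrow> graph" where
  "sweep n F j = (if j \<le> n then saturate_below (n - j) F else isolate_below (j - n) F)"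

lemma simple_graph_sweep: "simple_graph n F \<Longrightarrow> simple_graph n (sweep n F j)"
  by (auto simp: simple_graph_def sweep_def saturate_below_def isolate_below_def)

lemma sweep_self [simp]: "sweep n F n = F"
  by (simp add: sweep_def saturate_below_def)

lemma sweep_0_complete: "a < n \<Longrightarrow> b < n \<Longrightarrow> a \<noteq> b \<Longrightarrow> sweep n F 0 a b"
  by (simp add: sweep_def saturate_below_def)

lemma sweep_double_edgeless: "a < n \<Longrightarrow> b < n \<Longrightarrow> \<not> sweep n F (2 * n) a b"
  by (simp add: sweep_def isolate_below_def)

lemma subgraph_sweep: "j \<le> j' \<Longrightarrow> subgraph n (sweep n F j') (sweep n F j)"
  by (auto simp: subgraph_def sweep_def saturate_below_def isolate_below_def)

lemma agree_off_sweep_Suc: "\<exists>i. agree_off i (sweep n F j) (sweep n F (Suc j))"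
proof (cases "j < n")
  case True
  then have "agree_off (n - Suc j) (sweep n F j) (sweep n F (Suc j))"
    by (auto simp: agree_off_def sweep_def saturate_below_def)
  then show ?thesis by blast
next
  case False
  then have "agree_off (j - n) (sweep n F j) (sweep n F (Suc j))"
    by (auto simp: agree_off_def sweep_def saturate_below_def isolate_below_def)
  then show ?thesis by blast
qed

lemma agree_off_sweep: "agree_off i F F' \<Longrightarrow> agree_off i (sweep n F j) (sweep n F' j)"
  by (simp add: agree_off_def sweep_def saturate_below_def isolate_below_def)

lemma sweep_cong:
  "(\<And>a b. a < n \<Longrightarrow> b < n \<Longrightarrow> F a b = F' a b) \<Longrightarrow> a < n \<Longrightarrow> b < n \<Longrightarrow>
    sweep n F j a b = sweep n F' j a b"
  by (simp add: sweep_def saturate_below_def isolate_below_def)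

definition splice :: "nat \<Rightarrow> graph \<Rightarrow> graph \<Rightarrow> graph" where
  "splice i G H = (\<lambda>a b. if a < i \<or> b < i then H a b else G a b)"

lemma simple_graph_splice: "simple_graph n G \<Longrightarrow> simple_graph n H \<Longrightarrow> simple_graph n (splice i G H)"
  by (auto simp: simple_graph_def splice_def)

lemma splice_0 [simp]: "splice 0 G H = G"
  by (simp add: splice_def)

lemma splice_self: "a < n \<Longrightarrow> b < n \<Longrightarrow> splice n G H a b = H a b"
  by (simp add: splice_def)

lemma agree_off_splice_Suc: "agree_off i (splice i G H) (splice (Suc i) G H)"
  by (auto simp: agree_off_def splice_def)

section \<open>Compactness of Omega\<close>

definition density_point :: "nat \<Rightarrow> nat \<Rightarrow> nat \<Rightarrow> graph \<Rightarrow> real \<times> real" where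
  "density_point s t n E = (clique_density s n (graph_compl E), clique_density t n E)"

lemma density_point_in_unit_square: "density_point s t n E \<in> cbox (0, 0) (1, 1)"
  by (simp add: density_point_def clique_density_nonneg clique_density_le_1)

lemma Omega_eq_limit_set: "Omega s t = limit_set (\<lambda>n. density_point s t n ` {E. simple_graph n E})"
proof (intro set_eqI iffI)
  fix p assume "p \<in> Omega s t"
  then obtain G where "\<forall>n. simple_graph n (G n)" "(\<lambda>n. density_point s t n (G n)) \<longlonglongrightarrow> p"
    by (cases p) (auto simp: Omega_def density_point_def clique_density_def dest: tendsto_Pair)
  then show "p \<in> limit_set (\<lambda>n. density_point s t n ` {E. simple_graph n E})"
    unfolding limit_set_def by (intro CollectI exI[of _ "\<lambda>n. density_point s t n (G n)"]) auto
next
  fix p assume "p \<in> limit_set (\<lambda>n. density_point s t n ` {E. simple_graph n E})"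
  then obtain x where x: "\<forall>n. \<exists>E. simple_graph n E \<and> x n = density_point s t n E" "x \<longlonglongrightarrow> p"
    by (auto simp: limit_set_def image_iff)
  then obtain G where "\<forall>n. simple_graph n (G n) \<and> x n = density_point s t n (G n)"
    unfolding choice_iff by blast
  with x(2) show "p \<in> Omega s t"
    using tendsto_fst[of x p] tendsto_snd[of x p]
    by (cases p) (auto simp: Omega_def density_point_def clique_density_def)
qed

lemma realisable_points_nonempty: "density_point s t n ` {E. simple_graph n E} \<noteq> {}"
  using simple_graph_def by blast

lemma mem_Omega_iff:
  "p \<in> Omega s t \<longleftrightarrow>
    (\<forall>e>0. \<forall>\<^sub>F n in sequentially. \<exists>E. simple_graph n E \<and> dist (density_point s t n E) p < e)"
  unfolding Omega_eq_limit_set mem_limit_set_iff[OF realisable_points_nonempty] by auto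

lemma compact_Omega: "compact (Omega s t)"
  unfolding Omega_eq_limit_set
proof (rule compact_limit_set[OF realisable_points_nonempty])
  show "density_point s t n ` {E. simple_graph n E} \<subseteq> cbox (0, 0) (1, 1)" for n
    using density_point_in_unit_square by blast
qed simp

lemma Omega_subset_unit_square: "Omega s t \<subseteq> cbox (0, 0) (1, 1)"
  unfolding Omega_eq_limit_set
  by (rule limit_set_subset) (use density_point_in_unit_square in blast)+

section \<open>Level graphs and the cone property of Omega\<close>

lemma discrete_ivt:
  fixes f :: "nat \<Rightarrow> real"
  assumes "\<And>i. i < N \<Longrightarrow> \<bar>f (Suc i) - f i\<bar> \<le> e" "f 0 \<le> w" "w \<le> f N" "0 \<le> e"
  shows "\<exists>i\<le>N. \<bar>f i - w\<bar> \<le> e"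
proof -
  define k where "k = (LEAST i. w \<le> f i)"
  have wk: "w \<le> f k" unfolding k_def by (rule LeastI[of _ N]) (rule assms(3))
  have kN: "k \<le> N" unfolding k_def by (rule Least_le) (rule assms(3))
  show ?thesis
  proof (cases k)
    case 0
    then show ?thesis using wk assms(2,4) by (intro exI[of _ 0]) auto
  next
    case (Suc m)
    have "f m < w" using not_less_Least[of m "\<lambda>i. w \<le> f i"] Suc unfolding k_def by simp
    moreover have "\<bar>f (Suc m) - f m\<bar> \<le> e" using assms(1)[of m] Suc kN by simp
    ultimately show ?thesis using wk Suc kN by (intro exI[of _ k]) auto
  qed
qed

locale clique_pair =
  fixes s t :: nat
  assumes two_le_s: "2 \<le> s" and two_le_t: "2 \<le> t"
begin

definition dsum :: "nat \<Rightarrow> graph \<Rightarrow> real" where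
  "dsum n E = diag_sum (density_point s t n E)"

definition ddiff :: "nat \<Rightarrow> graph \<Rightarrow> real" where
  "ddiff n E = diag_diff (density_point s t n E)"

definition vertex_bound :: "nat \<Rightarrow> real" where
  "vertex_bound n = real (s + t) / real n"

lemma vertex_bound_nonneg: "0 \<le> vertex_bound n"
  by (simp add: vertex_bound_def)

lemma dsum_ddiff_agree_off:
  assumes "agree_off i E E'" "s + t \<le> n"
  shows "\<bar>dsum n E - dsum n E'\<bar> \<le> vertex_bound n" "\<bar>ddiff n E - ddiff n E'\<bar> \<le> vertex_bound n"
proof -
  have "\<bar>clique_density s n (graph_compl E) - clique_density s n (graph_compl E')\<bar> \<le> real s / real n"
    using two_le_s assms by (intro clique_density_agree_off agree_off_compl) auto
  moreover have "\<bar>clique_density t n E - clique_density t n E'\<bar> \<le> real t / real n"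
    using two_le_t assms by (intro clique_density_agree_off) auto
  moreover have "vertex_bound n = real s / real n + real t / real n"
    by (simp add: vertex_bound_def add_divide_distrib)
  ultimately show "\<bar>dsum n E - dsum n E'\<bar> \<le> vertex_bound n" "\<bar>ddiff n E - ddiff n E'\<bar> \<le> vertex_bound n"
    by (simp_all add: dsum_def ddiff_def density_point_def diag_sum_def diag_diff_def abs_le_iff)
qed

lemma dsum_change_le_ddiff_change:
  assumes "subgraph n E E'"
  shows "\<bar>dsum n E' - dsum n E\<bar> \<le> ddiff n E - ddiff n E'"
proof -
  have "clique_density s n (graph_compl E') \<le> clique_density s n (graph_compl E)"
    using assms by (intro clique_density_mono subgraph_compl)
  moreover have "clique_density t n E \<le> clique_density t n E'"
    using assms by (rule clique_density_mono)
  ultimately show ?thesis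
    by (simp add: dsum_def ddiff_def density_point_def diag_sum_def diag_diff_def abs_le_iff)
qed

lemma dsum_cong:
  "(\<And>a b. a < n \<Longrightarrow> b < n \<Longrightarrow> E a b = E' a b) \<Longrightarrow> dsum n E = dsum n E'"
  and ddiff_cong:
  "(\<And>a b. a < n \<Longrightarrow> b < n \<Longrightarrow> E a b = E' a b) \<Longrightarrow> ddiff n E = ddiff n E'"
  by (simp_all add: dsum_def ddiff_def density_point_def clique_density_def graph_compl_def
      cong: k_cliques_cong)

lemma ddiff_sweep_0:
  assumes "s + t \<le> n"
  shows "ddiff n (sweep n F 0) = -1"
proof -
  have "clique_density s n (graph_compl (sweep n F 0)) = 0"
    using two_le_s sweep_0_complete by (intro clique_density_edgeless) (auto simp: graph_compl_def)
  moreover have "clique_density t n (sweep n F 0) = 1"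
    using assms sweep_0_complete by (intro clique_density_complete) auto
  ultimately show ?thesis by (simp add: ddiff_def density_point_def diag_diff_def)
qed

lemma ddiff_sweep_double:
  assumes "s + t \<le> n"
  shows "ddiff n (sweep n F (2 * n)) = 1"
proof -
  have "clique_density s n (graph_compl (sweep n F (2 * n))) = 1"
    using assms sweep_double_edgeless by (intro clique_density_complete) (auto simp: graph_compl_def)
  moreover have "clique_density t n (sweep n F (2 * n)) = 0"
    using two_le_t sweep_double_edgeless by (intro clique_density_edgeless) auto
  ultimately show ?thesis by (simp add: ddiff_def density_point_def diag_diff_def)
qed

definition level_index :: "nat \<Rightarrow> real \<Rightarrow> graph \<Rightarrow> nat" where
  "level_index n c F = (LEAST j. c \<le> ddiff n (sweep n F j))"

definition level_graph :: "nat \<Rightarrow> real \<Rightarrow> graph \<Rightarrow> graph" where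
  "level_graph n c F = sweep n F (level_index n c F)"

lemma simple_graph_level_graph: "simple_graph n F \<Longrightarrow> simple_graph n (level_graph n c F)"
  by (simp add: level_graph_def simple_graph_sweep)

lemma ddiff_level_graph_ge:
  assumes "c \<le> 1" "s + t \<le> n"
  shows "c \<le> ddiff n (level_graph n c F)"
  unfolding level_graph_def level_index_def
  by (rule LeastI[of _ "2 * n"]) (simp add: ddiff_sweep_double assms)

lemma ddiff_below_level:
  "j < level_index n c F \<Longrightarrow> ddiff n (sweep n F j) < c"
  unfolding level_index_def by (meson not_le not_less_Least)

lemma ddiff_level_graph_le:
  assumes "-1 \<le> c" "s + t \<le> n"
  shows "ddiff n (level_graph n c F) \<le> c + vertex_bound n"
proof (cases "level_index n c F")
  case 0
  then show ?thesis
    using ddiff_sweep_0[OF assms(2)] assms(1) vertex_bound_nonneg[of n]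
    by (simp add: level_graph_def)
next
  case (Suc j)
  obtain i where "agree_off i (sweep n F j) (sweep n F (Suc j))" using agree_off_sweep_Suc by blast
  then have "\<bar>ddiff n (sweep n F j) - ddiff n (sweep n F (Suc j))\<bar> \<le> vertex_bound n"
    using dsum_ddiff_agree_off(2) assms(2) by blast
  moreover have "ddiff n (sweep n F j) < c" using ddiff_below_level Suc by simp
  ultimately show ?thesis using Suc by (simp add: level_graph_def)
qed

lemma dsum_level_graph_near:
  assumes "-1 \<le> c" "c \<le> 1" "s + t \<le> n"
  shows "\<bar>dsum n (level_graph n c F) - dsum n F\<bar> \<le> \<bar>c - ddiff n F\<bar> + vertex_bound n"
proof (cases "level_index n c F \<le> n")
  case True
  have "\<bar>dsum n (level_graph n c F) - dsum n F\<bar> \<le> ddiff n F - ddiff n (level_graph n c F)"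
    using dsum_change_le_ddiff_change[OF subgraph_sweep[OF True, of n F]] by (simp add: level_graph_def)
  moreover have "c \<le> ddiff n (level_graph n c F)" by (rule ddiff_level_graph_ge[OF assms(2,3)])
  ultimately show ?thesis using vertex_bound_nonneg[of n] by linarith
next
  case False
  then have "\<bar>dsum n F - dsum n (level_graph n c F)\<bar> \<le> ddiff n (level_graph n c F) - ddiff n F"
    using dsum_change_le_ddiff_change[OF subgraph_sweep, of n "level_index n c F" n F]
    by (simp add: level_graph_def)
  moreover have "ddiff n F < c" using ddiff_below_level[of n n c F] False by simp
  moreover have "ddiff n (level_graph n c F) \<le> c + vertex_bound n"
    by (rule ddiff_level_graph_le[OF assms(1,3)])
  ultimately show ?thesis by linarith
qed

lemma level_index_cong:
  assumes "\<And>a b. a < n \<Longrightarrow> b < n \<Longrightarrow> F a b = F' a b"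
  shows "level_index n c F = level_index n c F'"
proof -
  have "ddiff n (sweep n F j) = ddiff n (sweep n F' j)" for j
    by (intro ddiff_cong sweep_cong[OF assms])
  then show ?thesis by (simp add: level_index_def)
qed

lemma dsum_level_graph_cong:
  assumes "\<And>a b. a < n \<Longrightarrow> b < n \<Longrightarrow> F a b = F' a b"
  shows "dsum n (level_graph n c F) = dsum n (level_graph n c F')"
proof -
  have "level_index n c F = level_index n c F'" by (rule level_index_cong[OF assms])
  then show ?thesis
    unfolding level_graph_def by (simp only:) (intro dsum_cong sweep_cong[OF assms])
qed

lemma dsum_level_graph_agree_off_ordered:
  assumes "agree_off i F F'" "-1 \<le> c" "c \<le> 1" "s + t \<le> n"
    and "level_index n c F \<le> level_index n c F'"
  shows "\<bar>dsum n (level_graph n c F) - dsum n (level_graph n c F')\<bar> \<le> 3 * vertex_bound n"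
proof -
  let ?j = "level_index n c F" and ?j' = "level_index n c F'"
  have same_step: "\<bar>dsum n (sweep n F ?j) - dsum n (sweep n F' ?j)\<bar> \<le> vertex_bound n"
    "\<bar>ddiff n (sweep n F ?j) - ddiff n (sweep n F' ?j)\<bar> \<le> vertex_bound n"
    using dsum_ddiff_agree_off[OF agree_off_sweep[OF assms(1)] assms(4)] by auto
  have "\<bar>dsum n (sweep n F' ?j) - dsum n (sweep n F' ?j')\<bar>
      \<le> ddiff n (sweep n F' ?j') - ddiff n (sweep n F' ?j)"
    using assms(5) by (intro dsum_change_le_ddiff_change subgraph_sweep)
  moreover have "ddiff n (sweep n F' ?j') \<le> c + vertex_bound n"
    using ddiff_level_graph_le[OF assms(2,4)] by (simp add: level_graph_def)
  moreover have "c \<le> ddiff n (sweep n F ?j)"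
    using ddiff_level_graph_ge[OF assms(3,4)] by (simp add: level_graph_def)
  ultimately show ?thesis using same_step unfolding level_graph_def by linarith
qed

lemma dsum_level_graph_agree_off:
  assumes "agree_off i F F'" "-1 \<le> c" "c \<le> 1" "s + t \<le> n"
  shows "\<bar>dsum n (level_graph n c F) - dsum n (level_graph n c F')\<bar> \<le> 3 * vertex_bound n"
proof (cases "level_index n c F \<le> level_index n c F'")
  case True
  then show ?thesis using dsum_level_graph_agree_off_ordered[OF assms] by simp
next
  case False
  then show ?thesis
    using dsum_level_graph_agree_off_ordered[OF agree_off_sym[OF assms(1)] assms(2-4)]
    by (simp add: abs_minus_commute)
qed

lemma exists_graph_near_level:
  assumes "s + t \<le> n" "-1 \<le> c" "c \<le> 1" "simple_graph n G" "simple_graph n H"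
    and "dsum n (level_graph n c G) \<le> w" "w \<le> dsum n (level_graph n c H)"
  shows "\<exists>F. simple_graph n F \<and> \<bar>dsum n F - w\<bar> \<le> 3 * vertex_bound n \<and>
    c \<le> ddiff n F \<and> ddiff n F \<le> c + vertex_bound n"
proof -
  define f where "f i = dsum n (level_graph n c (splice i G H))" for i
  have "f n = dsum n (level_graph n c H)"
    unfolding f_def by (rule dsum_level_graph_cong) (rule splice_self)
  then have "\<exists>i\<le>n. \<bar>f i - w\<bar> \<le> 3 * vertex_bound n"
    using assms(6,7) vertex_bound_nonneg[of n]
      dsum_level_graph_agree_off[OF agree_off_splice_Suc assms(2,3,1)]
    by (intro discrete_ivt) (auto simp: f_def abs_minus_commute)
  then obtain i where "\<bar>f i - w\<bar> \<le> 3 * vertex_bound n" by blast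
  moreover have "simple_graph n (level_graph n c (splice i G H))"
    using assms(4,5) by (intro simple_graph_level_graph simple_graph_splice)
  ultimately show ?thesis
    using ddiff_level_graph_ge[OF assms(3,1)] ddiff_level_graph_le[OF assms(2,1)]
    unfolding f_def by blast
qed

lemma exists_graph_near_target:
  assumes "s + t \<le> n" "-1 \<le> c" "c \<le> 1" "simple_graph n G" "simple_graph n H"
    and "dsum n G + \<bar>c - ddiff n G\<bar> + vertex_bound n \<le> w"
    and "w \<le> dsum n H - \<bar>c - ddiff n H\<bar> - vertex_bound n"
  shows "\<exists>F. simple_graph n F \<and> dist (density_point s t n F) (of_diag w c) \<le> 4 * vertex_bound n"
proof -
  have "dsum n (level_graph n c G) \<le> w" "w \<le> dsum n (level_graph n c H)"
    using dsum_level_graph_near[OF assms(2,3,1), of G] dsum_level_graph_near[OF assms(2,3,1), of H]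
      assms(6,7) by linarith+
  then obtain F where F: "simple_graph n F" "\<bar>dsum n F - w\<bar> \<le> 3 * vertex_bound n"
    "c \<le> ddiff n F" "ddiff n F \<le> c + vertex_bound n"
    using exists_graph_near_level[OF assms(1-5)] by blast
  have "dist (density_point s t n F) (of_diag w c) \<le> \<bar>dsum n F - w\<bar> + \<bar>ddiff n F - c\<bar>"
    unfolding dsum_def ddiff_def by (rule dist_of_diag_le)
  also have "\<dots> \<le> 4 * vertex_bound n" using F(2-4) by linarith
  finally show ?thesis using F(1) by blast
qed

lemma eventually_vertex_bound_less: "0 < r \<Longrightarrow> \<forall>\<^sub>F n in sequentially. vertex_bound n < r"
  unfolding vertex_bound_def by (rule order_tendstoD(2)[OF lim_const_over_n])

lemma eventually_graph_near_cone_point: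
  assumes p: "p \<in> Omega s t" and q: "q \<in> Omega s t" and c: "-1 \<le> c" "c \<le> 1"
    and "0 < eta" "eta \<le> w - diag_sum p - \<bar>c - diag_diff p\<bar>" "eta \<le> diag_sum q - \<bar>c - diag_diff q\<bar> - w"
  shows "\<forall>\<^sub>F n in sequentially.
    \<exists>F. simple_graph n F \<and> dist (density_point s t n F) (of_diag w c) \<le> 4 * vertex_bound n"
proof -
  have "\<forall>\<^sub>F n in sequentially. \<exists>G. simple_graph n G \<and> dist (density_point s t n G) p < eta / 8"
    using p \<open>0 < eta\<close> unfolding mem_Omega_iff by (meson zero_less_divide_iff zero_less_numeral)
  moreover have "\<forall>\<^sub>F n in sequentially. \<exists>H. simple_graph n H \<and> dist (density_point s t n H) q < eta / 8"
    using q \<open>0 < eta\<close> unfolding mem_Omega_iff by (meson zero_less_divide_iff zero_less_numeral)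
  moreover have "\<forall>\<^sub>F n in sequentially. vertex_bound n < eta / 2"
    using \<open>0 < eta\<close> by (intro eventually_vertex_bound_less) simp
  ultimately show ?thesis
    using eventually_ge_at_top[of "s + t"]
  proof eventually_elim
    case (elim n)
    then obtain G H where G: "simple_graph n G" "dist (density_point s t n G) p < eta / 8"
      and H: "simple_graph n H" "dist (density_point s t n H) q < eta / 8" by blast
    have "dsum n G + \<bar>c - ddiff n G\<bar> + vertex_bound n \<le> w"
      using diag_sum_dist_le[of "density_point s t n G" p] diag_diff_dist_le[of "density_point s t n G" p]
        G(2) elim(3) assms(6) unfolding dsum_def ddiff_def by arith
    moreover have "w \<le> dsum n H - \<bar>c - ddiff n H\<bar> - vertex_bound n"
      using diag_sum_dist_le[of "density_point s t n H" q] diag_diff_dist_le[of "density_point s t n H" q]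
        H(2) elim(3) assms(7) unfolding dsum_def ddiff_def by arith
    ultimately show ?case
      using exists_graph_near_target[OF elim(4) c G(1) H(1)] by blast
  qed
qed

lemma cone_interpolating_Omega: "cone_interpolating (Omega s t)"
  unfolding cone_interpolating_def
proof (intro ballI allI impI)
  fix p q w c
  assume p: "p \<in> Omega s t" and q: "q \<in> Omega s t"
    and between: "diag_sum p + \<bar>c - diag_diff p\<bar> < w \<and> w < diag_sum q - \<bar>c - diag_diff q\<bar>"
  have c: "-1 \<le> c" "c \<le> 1"
    using cone_gap_imp_level_bounds p q Omega_subset_unit_square between by (meson order.strict_trans subsetD)+
  define eta where "eta = min (w - diag_sum p - \<bar>c - diag_diff p\<bar>) (diag_sum q - \<bar>c - diag_diff q\<bar> - w)"
  have "0 < eta" using between by (simp add: eta_def)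
  have near: "\<forall>\<^sub>F n in sequentially.
      \<exists>F. simple_graph n F \<and> dist (density_point s t n F) (of_diag w c) \<le> 4 * vertex_bound n"
    using p q c \<open>0 < eta\<close> by (rule eventually_graph_near_cone_point) (simp_all add: eta_def)
  show "of_diag w c \<in> Omega s t"
    unfolding mem_Omega_iff
  proof (intro allI impI)
    fix e :: real assume "0 < e"
    then have "\<forall>\<^sub>F n in sequentially. 4 * vertex_bound n < e"
      using eventually_vertex_bound_less[of "e / 4"] by (simp add: mult.commute)
    with near show "\<forall>\<^sub>F n in sequentially.
        \<exists>F. simple_graph n F \<and> dist (density_point s t n F) (of_diag w c) < e"
      by eventually_elim force
  qed
qed

end

section \<open>Clique graphs and the fibres of Omega\<close>

lemma card_UN_insert_image:
  assumes "finite A" "finite T" "\<And>X. X \<in> T \<Longrightarrow> X \<inter> A = {}"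
  shows "card (\<Union>a\<in>A. insert a ` T) = card A * card T"
proof -
  have inj: "inj_on (insert a) T" if "a \<in> A" for a
  proof (rule inj_onI)
    fix X Y assume "X \<in> T" "Y \<in> T" "insert a X = insert a Y"
    moreover have "a \<notin> X" "a \<notin> Y" using assms(3) that \<open>X \<in> T\<close> \<open>Y \<in> T\<close> by blast+
    ultimately show "X = Y" by (simp add: insert_ident)
  qed
  have "card (\<Union>a\<in>A. insert a ` T) = (\<Sum>a\<in>A. card (insert a ` T))"
  proof (rule card_UN_disjoint)
    show "\<forall>a\<in>A. \<forall>b\<in>A. a \<noteq> b \<longrightarrow> insert a ` T \<inter> insert b ` T = {}"
      using assms(3) by (fastforce simp: image_iff)
  qed (use assms in auto)
  also have "\<dots> = card A * card T"
    using inj by (simp add: card_image)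
  finally show ?thesis .
qed

definition clique_graph :: "nat \<Rightarrow> graph" where
  "clique_graph m = (\<lambda>a b. a \<noteq> b \<and> a < m \<and> b < m)"

lemma simple_graph_clique_graph: "simple_graph n (clique_graph m)"
  by (auto simp: simple_graph_def clique_graph_def)

lemma k_cliques_clique_graph:
  assumes "m \<le> n" "2 \<le> t"
  shows "k_cliques t n (clique_graph m) = m choose t"
proof -
  have "cliques t n (clique_graph m) = {S. S \<subseteq> {..<m} \<and> card S = t}"
  proof (intro set_eqI iffI)
    fix S assume S: "S \<in> cliques t n (clique_graph m)"
    have "x < m" if "x \<in> S" for x
    proof -
      obtain y where "y \<in> S" "y \<noteq> x"
        using two_le_card_imp_other[of S x] S assms(2) \<open>x \<in> S\<close> by (auto simp: cliques_def)
      then show ?thesis using S \<open>x \<in> S\<close> by (auto simp: cliques_def clique_graph_def)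
    qed
    then show "S \<in> {S. S \<subseteq> {..<m} \<and> card S = t}" using S by (auto simp: cliques_def)
  qed (use assms(1) in \<open>auto simp: cliques_def clique_graph_def\<close>)
  then show ?thesis by (simp add: k_cliques_eq_card n_subsets)
qed

lemma cliques_compl_clique_graph:
  assumes "m \<le> n" "1 \<le> s"
  shows "cliques s n (graph_compl (clique_graph m)) =
    {S. S \<subseteq> {m..<n} \<and> card S = s} \<union> (\<Union>a\<in>{..<m}. insert a ` {T. T \<subseteq> {m..<n} \<and> card T = s - 1})"
    (is "?C = ?A \<union> ?B")
proof (intro set_eqI iffI)
  fix S assume S: "S \<in> ?C"
  then have Sn: "S \<subseteq> {..<n}" and "finite S" and cS: "card S = s"
    and indep: "\<And>x y. x \<in> S \<Longrightarrow> y \<in> S \<Longrightarrow> x \<noteq> y \<Longrightarrow> \<not> (x < m \<and> y < m)"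
    using finite_subset[of S "{..<n}"] by (auto simp: cliques_def graph_compl_def clique_graph_def)
  show "S \<in> ?A \<union> ?B"
  proof (cases "\<exists>a\<in>S. a < m")
    case False
    then show ?thesis using Sn cS by force
  next
    case True
    then obtain a where a: "a \<in> S" "a < m" by blast
    have "S - {a} \<subseteq> {m..<n}" using indep[of _ a] a Sn by force
    moreover have "card (S - {a}) = s - 1" using cS a \<open>finite S\<close> by simp
    moreover have "S = insert a (S - {a})" using a by auto
    ultimately show ?thesis using a(2) by blast
  qed
next
  fix S assume "S \<in> ?A \<union> ?B"
  then consider "S \<in> ?A" | a T where "a < m" "T \<subseteq> {m..<n}" "card T = s - 1" "S = insert a T"
    by blast
  then show "S \<in> ?C"
  proof cases
    case 1
    then show ?thesis by (auto simp: cliques_def graph_compl_def clique_graph_def)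
  next
    case (2 a T)
    then have "finite T" "a \<notin> T" using finite_subset by auto
    then have "card S = s" using 2 assms(2) by simp
    moreover have "S \<subseteq> {..<n}" using 2 assms(1) by auto
    moreover have "\<forall>x\<in>S. \<forall>y\<in>S. x \<noteq> y \<longrightarrow> graph_compl (clique_graph m) x y"
      using 2(1,2) unfolding 2(4) by (auto simp: graph_compl_def clique_graph_def subset_iff)
    ultimately show ?thesis by (simp add: cliques_def)
  qed
qed

lemma k_cliques_compl_clique_graph:
  assumes "m \<le> n" "1 \<le> s"
  shows "k_cliques s n (graph_compl (clique_graph m)) = ((n - m) choose s) + m * ((n - m) choose (s - 1))"
proof -
  let ?A = "{S. S \<subseteq> {m..<n} \<and> card S = s}" and ?T = "{T. T \<subseteq> {m..<n} \<and> card T = s - 1}"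
  have "card (\<Union>a\<in>{..<m}. insert a ` ?T) = m * ((n - m) choose (s - 1))"
    by (subst card_UN_insert_image) (auto simp: n_subsets)
  moreover have "?A \<inter> (\<Union>a\<in>{..<m}. insert a ` ?T) = {}" by auto
  moreover have "card ?A = (n - m) choose s" by (simp add: n_subsets)
  ultimately show ?thesis
    unfolding k_cliques_eq_card cliques_compl_clique_graph[OF assms]
    by (subst card_Un_disjoint) auto
qed

lemma tendsto_choose_ratio:
  fixes a b :: "nat \<Rightarrow> nat"
  assumes ratio: "(\<lambda>n. real (a n) / real (b n)) \<longlonglongrightarrow> \<beta>"
    and unbounded: "filterlim (\<lambda>n. real (b n)) at_top sequentially"
  shows "(\<lambda>n. real (a n choose k) / real (b n choose k)) \<longlonglongrightarrow> \<beta> ^ k"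
proof -
  define q where "q n i = (real (a n) / real (b n) - real i / real (b n)) / (1 - real i / real (b n))"
    for n i
  have "(\<lambda>n. real i / real (b n)) \<longlonglongrightarrow> 0" for i
    using tendsto_divide_0[OF tendsto_const filterlim_at_top_imp_at_infinity[OF unbounded]] .
  then have "(\<lambda>n. q n i) \<longlonglongrightarrow> (\<beta> - 0) / (1 - 0)" for i
    unfolding q_def by (intro tendsto_intros ratio) auto
  then have "(\<lambda>n. \<Prod>i<k. q n i) \<longlonglongrightarrow> (\<Prod>i<k. \<beta>)"
    by (intro tendsto_prod) simp
  moreover have "\<forall>\<^sub>F n in sequentially. (\<Prod>i<k. q n i) = real (a n choose k) / real (b n choose k)"
    using unbounded[unfolded filterlim_at_top_dense, rule_format, of "real k"]
  proof (rule eventually_mono)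
    fix n assume k: "real k < real (b n)"
    have "q n i = (real (a n) - real i) / (real (b n) - real i)" if "i < k" for i
      using k that by (simp add: q_def field_simps)
    then have "(\<Prod>i<k. q n i) = (\<Prod>i<k. real (a n) - real i) / (\<Prod>i<k. real (b n) - real i)"
      by (simp add: prod_dividef)
    also have "\<dots> = real (a n choose k) / real (b n choose k)"
      by (simp add: binomial_gbinomial gbinomial_prod_rev atLeast0LessThan)
    finally show "(\<Prod>i<k. q n i) = real (a n choose k) / real (b n choose k)" .
  qed
  ultimately show ?thesis by (simp add: Lim_transform_eventually)
qed

lemma tendsto_ratio_diff_const:
  assumes "(\<lambda>n. real (a n) / real n) \<longlonglongrightarrow> \<beta>"
  shows "(\<lambda>n. real (a n) / real (n - k)) \<longlonglongrightarrow> \<beta>"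
proof -
  have "(\<lambda>n. real (a n) / real n / (1 - real k / real n)) \<longlonglongrightarrow> \<beta> / (1 - 0)"
    by (intro tendsto_intros assms lim_const_over_n) simp
  moreover have "\<forall>\<^sub>F n in sequentially. real (a n) / real n / (1 - real k / real n) = real (a n) / real (n - k)"
    using eventually_gt_at_top[of k] by eventually_elim (simp add: field_simps)
  ultimately show ?thesis by (simp add: Lim_transform_eventually)
qed

definition scaled_floor :: "real \<Rightarrow> nat \<Rightarrow> nat" where
  "scaled_floor \<alpha> n = nat \<lfloor>\<alpha> * real n\<rfloor>"

lemma scaled_floor_le: "\<alpha> \<le> 1 \<Longrightarrow> scaled_floor \<alpha> n \<le> n"
proof -
  assume "\<alpha> \<le> 1"
  then have "\<alpha> * real n \<le> real n" using mult_right_mono[of \<alpha> 1 "real n"] by simp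
  then show ?thesis unfolding scaled_floor_def by linarith
qed

lemma tendsto_scaled_floor_ratio:
  assumes "0 \<le> \<alpha>"
  shows "(\<lambda>n. real (scaled_floor \<alpha> n) / real n) \<longlonglongrightarrow> \<alpha>"
proof (rule tendsto_sandwich)
  have floor: "\<alpha> * real n - 1 < real (scaled_floor \<alpha> n)" "real (scaled_floor \<alpha> n) \<le> \<alpha> * real n" for n
    using assms by (simp_all add: scaled_floor_def)
  have "\<alpha> - 1 / real n \<le> real (scaled_floor \<alpha> n) / real n" if "0 < n" for n
  proof -
    have "\<alpha> - 1 / real n = (\<alpha> * real n - 1) / real n" using that by (simp add: field_simps)
    also have "\<dots> \<le> real (scaled_floor \<alpha> n) / real n"
      using floor(1)[of n] by (intro divide_right_mono) auto
    finally show ?thesis .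
  qed
  then show "\<forall>\<^sub>F n in sequentially. \<alpha> - 1 / real n \<le> real (scaled_floor \<alpha> n) / real n"
    by (rule eventually_mono[OF eventually_gt_at_top[of 0]])
  show "\<forall>\<^sub>F n in sequentially. real (scaled_floor \<alpha> n) / real n \<le> \<alpha>"
    using eventually_gt_at_top[of 0]
    by eventually_elim (use floor(2) in \<open>simp add: field_simps\<close>)
  show "(\<lambda>n. \<alpha> - 1 / real n) \<longlonglongrightarrow> \<alpha>"
    using tendsto_diff[OF tendsto_const lim_const_over_n, of \<alpha> 1] by simp
qed simp

lemma tendsto_compl_ratio:
  assumes "\<And>n. m n \<le> n" "(\<lambda>n. real (m n) / real n) \<longlonglongrightarrow> \<alpha>"
  shows "(\<lambda>n. real (n - m n) / real n) \<longlonglongrightarrow> 1 - \<alpha>"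
proof -
  have "(\<lambda>n. 1 - real (m n) / real n) \<longlonglongrightarrow> 1 - \<alpha>"
    by (intro tendsto_intros assms(2))
  moreover have "\<forall>\<^sub>F n in sequentially. 1 - real (m n) / real n = real (n - m n) / real n"
    using eventually_gt_at_top[of 0]
    by eventually_elim (use assms(1) in \<open>simp add: field_simps\<close>)
  ultimately show ?thesis by (simp add: Lim_transform_eventually)
qed

lemma tendsto_clique_density_clique_graph:
  assumes "2 \<le> t" "\<And>n. m n \<le> n" "(\<lambda>n. real (m n) / real n) \<longlonglongrightarrow> \<alpha>"
  shows "(\<lambda>n. clique_density t n (clique_graph (m n))) \<longlonglongrightarrow> \<alpha> ^ t"
  using tendsto_choose_ratio[OF assms(3) filterlim_real_sequentially, of t] assms(1,2)
  by (simp add: clique_density_def k_cliques_clique_graph)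

lemma tendsto_one_vertex_in_clique_ratio:
  assumes "1 \<le> s" "\<And>n. m n \<le> n" "(\<lambda>n. real (m n) / real n) \<longlonglongrightarrow> \<alpha>"
  shows "(\<lambda>n. real (m n * ((n - m n) choose (s - 1))) / real (n choose s))
    \<longlonglongrightarrow> real s * \<alpha> * (1 - \<alpha>) ^ (s - 1)"
proof -
  have "(\<lambda>n. real ((n - m n) choose (s - 1)) / real ((n - 1) choose (s - 1))) \<longlonglongrightarrow> (1 - \<alpha>) ^ (s - 1)"
    using filterlim_compose[OF filterlim_real_sequentially filterlim_minus_const_nat_at_top]
    by (intro tendsto_choose_ratio tendsto_ratio_diff_const tendsto_compl_ratio assms(2,3))
  then have "(\<lambda>n. real s * (real (m n) / real n) *
      (real ((n - m n) choose (s - 1)) / real ((n - 1) choose (s - 1))))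
      \<longlonglongrightarrow> real s * \<alpha> * (1 - \<alpha>) ^ (s - 1)"
    by (intro tendsto_intros assms(3))
  moreover have "\<forall>\<^sub>F n in sequentially.
      real s * (real (m n) / real n) * (real ((n - m n) choose (s - 1)) / real ((n - 1) choose (s - 1)))
      = real (m n * ((n - m n) choose (s - 1))) / real (n choose s)"
    using eventually_ge_at_top[of s]
  proof (rule eventually_mono)
    fix n assume "s \<le> n"
    then have "real ((n - 1) choose (s - 1)) / real (n choose s) = real s / real n"
      "real ((n - 1) choose (s - 1)) \<noteq> 0" "real (n choose s) \<noteq> 0"
      using choose_pred_over_choose[OF assms(1)] assms(1) by simp_all
    then show "real s * (real (m n) / real n) * (real ((n - m n) choose (s - 1)) / real ((n - 1) choose (s - 1)))
      = real (m n * ((n - m n) choose (s - 1))) / real (n choose s)"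
      using assms(1) \<open>s \<le> n\<close> by (simp add: field_simps)
  qed
  ultimately show ?thesis by (rule Lim_transform_eventually)
qed

lemma tendsto_clique_density_compl_clique_graph:
  assumes "1 \<le> s" "\<And>n. m n \<le> n" "(\<lambda>n. real (m n) / real n) \<longlonglongrightarrow> \<alpha>"
  shows "(\<lambda>n. clique_density s n (graph_compl (clique_graph (m n))))
    \<longlonglongrightarrow> (1 - \<alpha>) ^ s + real s * \<alpha> * (1 - \<alpha>) ^ (s - 1)"
proof -
  have "(\<lambda>n. real ((n - m n) choose s) / real (n choose s)) \<longlonglongrightarrow> (1 - \<alpha>) ^ s"
    using tendsto_compl_ratio[OF assms(2,3)] filterlim_real_sequentially by (rule tendsto_choose_ratio)
  from tendsto_add[OF this tendsto_one_vertex_in_clique_ratio[OF assms]] show ?thesis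
    using assms(1,2) by (simp add: clique_density_def k_cliques_compl_clique_graph add_divide_distrib)
qed

lemma clique_graph_point_in_Omega:
  assumes "1 \<le> s" "2 \<le> t" "0 \<le> \<alpha>" "\<alpha> \<le> 1"
  shows "((1 - \<alpha>) ^ s + real s * \<alpha> * (1 - \<alpha>) ^ (s - 1), \<alpha> ^ t) \<in> Omega s t"
proof -
  let ?m = "scaled_floor \<alpha>"
  have "\<And>n. ?m n \<le> n" "(\<lambda>n. real (?m n) / real n) \<longlonglongrightarrow> \<alpha>"
    using scaled_floor_le[OF assms(4)] tendsto_scaled_floor_ratio[OF assms(3)] by auto
  then show ?thesis
    using tendsto_clique_density_compl_clique_graph[OF assms(1)] tendsto_clique_density_clique_graph[OF assms(2)]
      simple_graph_clique_graph
    unfolding Omega_def mem_Collect_eq prod.case clique_density_def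
    by (intro exI[of _ "\<lambda>n. clique_graph (?m n)"]) simp
qed

lemma diag_diff_Omega:
  assumes "2 \<le> s" "2 \<le> t"
  shows "diag_diff ` Omega s t = {-1..1}"
proof
  show "diag_diff ` Omega s t \<subseteq> {-1..1}"
    using Omega_subset_unit_square by (force simp: diag_diff_def cbox_Pair_eq mem_Times_iff)
  show "{-1..1} \<subseteq> diag_diff ` Omega s t"
  proof
    fix c :: real assume c: "c \<in> {-1..1}"
    define g where "g \<alpha> = (1 - \<alpha>) ^ s + real s * \<alpha> * (1 - \<alpha>) ^ (s - 1) - \<alpha> ^ t" for \<alpha> :: real
    have "g 0 = 1" "g 1 = -1" using assms by (simp_all add: g_def power_0_left)
    moreover have "continuous_on {0..1} g" unfolding g_def by (intro continuous_intros)
    ultimately obtain \<alpha> where "0 \<le> \<alpha>" "\<alpha> \<le> 1" "g \<alpha> = c"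
      using IVT2'[of g 1 c 0] c by auto
    then show "c \<in> diag_diff ` Omega s t"
      using clique_graph_point_in_Omega[of s t \<alpha>] assms
      by (intro image_eqI) (auto simp: diag_diff_def g_def)
  qed
qed

theorem proposition2p1:
  fixes s t :: nat
  assumes "s \<ge> 2" and "t \<ge> 2"
  shows "compact (Omega s t) \<and> simply_connected (Omega s t)"
proof -
  interpret clique_pair s t using assms by unfold_locales
  have "contractible (Omega s t)"
  proof (rule contractible_if_cone_interpolating)
    show "compact (Omega s t)" by (rule compact_Omega)
    show "cone_interpolating (Omega s t)" by (rule cone_interpolating_Omega)
    show "convex (diag_diff ` Omega s t)" using assms by (simp add: diag_diff_Omega)
  qed
  then show ?thesis using compact_Omega contractible_imp_simply_connected by blast
qed

end
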